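(* Let $(\bar x,\bar y)$ be a local minimax point of $\min_{x\in X}\max_{y\in Y}f(x,y)$. Suppose $f$ is twice semidifferentiable at $(\bar x,\bar y)$, the separation property holds for the subderivative of $f$ at $(\bar x,\bar y)$, and for every $h\in T_Y(\bar y)\setminus\{0\}$ with $\mathrm{d}_yf(\bar x,\bar y)(h)=0$ we have $$\mathrm{d}^2_{yy}f(\bar x,\bar y)(h)-\mathrm{d}^2\delta_X(\bar x;\mathrm{d}_xf(\bar x,\bar y))(0)-\mathrm{d}^2\delta_Y(\bar y;\mathrm{d}_yf(\bar x,\bar y))(h)<0,$$ where at least one of $\mathrm{d}^2\delta_X(\bar x;\mathrm{d}_xf(\bar x,\bar y))(0)$ and $\mathrm{d}^2\delta_Y(\bar y;\mathrm{d}_yf(\bar x,\bar y))(h)$ is finite. Then $(\bar x,\bar y)$ is a calm local minimax point.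
   Context: $X\subseteq\mathbb{R}^n$, $Y\subseteq\mathbb{R}^m$ nonempty closed, $f:\mathbb{R}^n\times\mathbb{R}^m\to\mathbb{R}$; $\mathbb{B}_\epsilon(z)$ closed Euclidean ball. Standing assumption: for every $x\in X$, $\bar y\in Y$, $\epsilon\ge0$ the maximum of $f(x,\cdot)$ over $Y\cap\mathbb{B}_\epsilon(\bar y)$ is attained. A radius function is $\tau:[0,\infty)\to[0,\infty)$ with $\tau(0)=0$, $\tau(\delta)\to0$ as $\delta\downarrow0$; calm at $0$ if $\tau(\delta)\le\kappa\delta$ for all $\delta\in[0,\delta_1]$ for some $\kappa,\delta_1>0$. $(\bar x,\bar y)\in X\times Y$ is a local minimax point if there exist $\delta_0>0$ and a radius function $\tau$ with $f(\bar x,y)\le f(\bar x,\bar y)\le\max_{y'\in Y\cap\mathbb{B}_{\tau(\delta)}(\bar y)}f(x,y')$ for all $\delta\in(0,\delta_0]$, $x\in X\cap\mathbb{B}_\delta(\bar x)$, $y\in Y\cap\mathbb{B}_\delta(\bar y)$; calm local minimax if moreover $\tau$ can be taken calm at $0$. Variational notation: for $\psi:\mathbb{R}^r\to\mathbb{R}$, $\mathrm{d}\psi(\bar z)(w):=\liminf_{t\downarrow0,w'\to w}\frac{\psi(\bar z+tw')-\psi(\bar z)}{t}$; semidifferentiable at $\bar z$ if for each $w$ this is a limit (real-valued); $\mathrm{d}^2\psi(\bar z)(w):=\liminf_{t\downarrow0,w'\to w}\frac{\psi(\bar z+tw')-\psi(\bar z)-t\,\mathrm{d}\psi(\bar z)(w')}{\frac12t^2}$;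 twice semidifferentiable if semidifferentiable and for each $w$ this liminf is a limit (real-valued). $\mathrm{d}_xf(\bar x,\bar y)(u)$ is the subderivative of $f(\cdot,\bar y)$ at $\bar x$; $\mathrm{d}_yf(\bar x,\bar y)(h)$ and $\mathrm{d}^2_{yy}f(\bar x,\bar y)(h)$ are the subderivative and second subderivative of $f(\bar x,\cdot)$ at $\bar y$; $\mathrm{d}f(\bar x,\bar y)(u,h)$ is the subderivative of $f$. The separation property for the subderivative holds at $(\bar x,\bar y)$ if $\mathrm{d}f(\bar x,\bar y)(u,h)=\mathrm{d}_xf(\bar x,\bar y)(u)+\mathrm{d}_yf(\bar x,\bar y)(h)$ for all $(u,h)$. $T_S(\bar z)$ is the tangent cone. For closed $S$, $\bar z\in S$, $\varphi:\mathbb{R}^r\to\mathbb{R}$: $\mathrm{d}^2\delta_S(\bar z;\varphi)(w):=\liminf_{t\downarrow0,\,w'\to w,\ \bar z+tw'\in S}\frac{-2\varphi(w')}{t}$ ($+\infty$ if no such $t,w'$). *)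

theory Defs
  imports "HOL-Analysis.Analysis" "HOL-Library.Extended_Real" "HOL-Library.Liminf_Limsup"
begin

definition subderiv :: "('v::real_normed_vector \<Rightarrow> real) \<Rightarrow> 'v \<Rightarrow> 'v \<Rightarrow> ereal" where
  "subderiv \<psi> z w = Liminf (at_right 0 \<times>\<^sub>F nhds w)
     (\<lambda>(t, w'). ereal ((\<psi> (z + t *\<^sub>R w') - \<psi> z) / t))"

definition semidifferentiable :: "('v::real_normed_vector \<Rightarrow> real) \<Rightarrow> 'v \<Rightarrow> bool" where
  "semidifferentiable \<psi> z \<longleftrightarrow> (\<forall>w. \<exists>L::real.
     ((\<lambda>(t, w'). (\<psi> (z + t *\<^sub>R w') - \<psi> z) / t) \<longlongrightarrow> L) (at_right 0 \<times>\<^sub>F nhds w))"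

definition second_quot :: "('v::real_normed_vector \<Rightarrow> real) \<Rightarrow> 'v \<Rightarrow> real \<times> 'v \<Rightarrow> ereal" where
  "second_quot \<psi> z = (\<lambda>(t, w'). (ereal (\<psi> (z + t *\<^sub>R w') - \<psi> z) - ereal t * subderiv \<psi> z w')
                                  / ereal (t\<^sup>2 / 2))"

definition second_subderiv :: "('v::real_normed_vector \<Rightarrow> real) \<Rightarrow> 'v \<Rightarrow> 'v \<Rightarrow> ereal" where
  "second_subderiv \<psi> z w = Liminf (at_right 0 \<times>\<^sub>F nhds w) (second_quot \<psi> z)"

definition twice_semidifferentiable :: "('v::real_normed_vector \<Rightarrow> real) \<Rightarrow> 'v \<Rightarrow> bool" where
  "twice_semidifferentiable \<psi> z \<longleftrightarrow> semidifferentiable \<psi> z \<and>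
     (\<forall>w. \<exists>L::real. (second_quot \<psi> z \<longlongrightarrow> ereal L) (at_right 0 \<times>\<^sub>F nhds w))"

definition tangent_cone :: "'v::real_normed_vector set \<Rightarrow> 'v \<Rightarrow> 'v set" where
  "tangent_cone S z = {w. \<exists>t ws. (\<forall>k. t k > 0) \<and> t \<longlonglongrightarrow> 0 \<and> ws \<longlonglongrightarrow> w \<and>
                              (\<forall>k. z + t k *\<^sub>R ws k \<in> S)}"

text \<open>Second subderivative of the indicator of S at z relative to phi
  (phi allowed extended-real valued; +infinity if the constraint filter is trivial).\<close>
definition second_subderiv_ind :: "'v::real_normed_vector set \<Rightarrow> 'v \<Rightarrow> ('v \<Rightarrow> ereal) \<Rightarrow> 'v \<Rightarrow> ereal" where
  "second_subderiv_ind S z \<phi> w = Liminf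
     (inf (at_right 0 \<times>\<^sub>F nhds w) (principal {(t, w'). z + t *\<^sub>R w' \<in> S}))
     (\<lambda>(t, w'). (- 2 * \<phi> w') / ereal t)"

definition dx_f :: "('a::real_normed_vector \<Rightarrow> 'b::real_normed_vector \<Rightarrow> real) \<Rightarrow> 'a \<Rightarrow> 'b \<Rightarrow> 'a \<Rightarrow> ereal" where
  "dx_f f x y u = subderiv (\<lambda>x'. f x' y) x u"

definition dy_f :: "('a::real_normed_vector \<Rightarrow> 'b::real_normed_vector \<Rightarrow> real) \<Rightarrow> 'a \<Rightarrow> 'b \<Rightarrow> 'b \<Rightarrow> ereal" where
  "dy_f f x y h = subderiv (\<lambda>y'. f x y') y h"

definition dyy_f :: "('a::real_normed_vector \<Rightarrow> 'b::real_normed_vector \<Rightarrow> real) \<Rightarrow> 'a \<Rightarrow> 'b \<Rightarrow> 'b \<Rightarrow> ereal" where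
  "dyy_f f x y h = second_subderiv (\<lambda>y'. f x y') y h"

definition separation_property :: "('a::real_normed_vector \<Rightarrow> 'b::real_normed_vector \<Rightarrow> real) \<Rightarrow> 'a \<Rightarrow> 'b \<Rightarrow> bool" where
  "separation_property f x y \<longleftrightarrow> (\<forall>u h.
     subderiv (\<lambda>p. f (fst p) (snd p)) (x, y) (u, h) = dx_f f x y u + dy_f f x y h)"

definition radius_function :: "(real \<Rightarrow> real) \<Rightarrow> bool" where
  "radius_function \<tau> \<longleftrightarrow> \<tau> 0 = 0 \<and> (\<forall>\<delta>\<ge>0. \<tau> \<delta> \<ge> 0) \<and> (\<tau> \<longlongrightarrow> 0) (at_right 0)"

definition calm_at_0 :: "(real \<Rightarrow> real) \<Rightarrow> bool" where
  "calm_at_0 \<tau> \<longleftrightarrow> (\<exists>\<kappa>>0. \<exists>\<delta>1>0. \<forall>\<delta>. 0 \<le> \<delta> \<and> \<delta> \<le> \<delta>1 \<longrightarrow> \<tau> \<delta> \<le> \<kappa> * \<delta>)"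

text \<open>Local minimax with radius function tau (max written as Sup; it is attained
  under the standing assumption).\<close>
definition minimax_with :: "'a::real_normed_vector set \<Rightarrow> 'b::real_normed_vector set \<Rightarrow>
    ('a \<Rightarrow> 'b \<Rightarrow> real) \<Rightarrow> 'a \<Rightarrow> 'b \<Rightarrow> (real \<Rightarrow> real) \<Rightarrow> bool" where
  "minimax_with X Y f xb yb \<tau> \<longleftrightarrow> radius_function \<tau> \<and> (\<exists>\<delta>0>0. \<forall>\<delta>. 0 < \<delta> \<and> \<delta> \<le> \<delta>0 \<longrightarrow>
     (\<forall>x \<in> X \<inter> cball xb \<delta>. \<forall>y \<in> Y \<inter> cball yb \<delta>.
        f xb y \<le> f xb yb \<and> f xb yb \<le> Sup (f x ` (Y \<inter> cball yb (\<tau> \<delta>)))))"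

definition local_minimax :: "'a::real_normed_vector set \<Rightarrow> 'b::real_normed_vector set \<Rightarrow>
    ('a \<Rightarrow> 'b \<Rightarrow> real) \<Rightarrow> 'a \<Rightarrow> 'b \<Rightarrow> bool" where
  "local_minimax X Y f xb yb \<longleftrightarrow> xb \<in> X \<and> yb \<in> Y \<and> (\<exists>\<tau>. minimax_with X Y f xb yb \<tau>)"

definition calm_local_minimax :: "'a::real_normed_vector set \<Rightarrow> 'b::real_normed_vector set \<Rightarrow>
    ('a \<Rightarrow> 'b \<Rightarrow> real) \<Rightarrow> 'a \<Rightarrow> 'b \<Rightarrow> bool" where
  "calm_local_minimax X Y f xb yb \<longleftrightarrow> xb \<in> X \<and> yb \<in> Y \<and>
     (\<exists>\<tau>. minimax_with X Y f xb yb \<tau> \<and> calm_at_0 \<tau>)"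

end

theory Submission
  imports Defs
begin

text \<open>Suppose no radius \<open>\<kappa> \<delta>\<close> works. Then for \<open>\<kappa> = n + 1\<close> there are \<open>x\<^sub>n\<close> with
  \<open>|x\<^sub>n - xb| \<le> \<delta>\<^sub>n \<le> 1/(n+1)\<close>, and a maximizer \<open>y\<^sub>n\<close> of \<open>f x\<^sub>n\<close> over the \<open>\<tau>(\<delta>\<^sub>n)\<close>-ball
  around \<open>yb\<close> has \<open>f x\<^sub>n y\<^sub>n \<ge> f xb yb\<close> but lies farther than \<open>(n+1) \<delta>\<^sub>n\<close> from \<open>yb\<close>.
  Writing \<open>x\<^sub>n = xb + t\<^sub>n u\<^sub>n\<close>, \<open>y\<^sub>n = yb + t\<^sub>n h\<^sub>n\<close> with \<open>t\<^sub>n = |y\<^sub>n - yb|\<close> gives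
  \<open>u\<^sub>n \<rightarrow> 0\<close> and, along a subsequence, \<open>h\<^sub>n \<rightarrow> h \<noteq> 0\<close>, a tangent direction of \<open>Y\<close>.
  The first-order expansion of \<open>f\<close> along \<open>(u\<^sub>n, h\<^sub>n)\<close> (using the separation property)
  forces \<open>d\<^sub>yf(xb,yb)(h) = 0\<close>, and the second-order expansion then yields
  \<open>d\<^sup>2\<^sub>y\<^sub>yf(xb,yb)(h) \<ge> d\<^sup>2\<delta>\<^sub>X(xb; d\<^sub>xf)(0) + d\<^sup>2\<delta>\<^sub>Y(yb; d\<^sub>yf)(h)\<close>, contradicting
  the second-order hypothesis.\<close>

lemma filterlim_at_right_zero_LIMSEQ:
  fixes t :: "nat \<Rightarrow> real"
  assumes "\<forall>k. t k > 0" "t \<longlonglongrightarrow> 0"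
  shows "filterlim t (at_right 0) sequentially"
  using assms by (auto simp: filterlim_at less_imp_neq[symmetric] intro: always_eventually)

lemma filterlim_Pair_at_right_nhds:
  fixes t :: "nat \<Rightarrow> real" and w :: "nat \<Rightarrow> 'v::real_normed_vector"
  assumes "\<forall>k. t k > 0" "t \<longlonglongrightarrow> 0" "w \<longlonglongrightarrow> w0"
  shows "filterlim (\<lambda>k. (t k, w k)) (at_right 0 \<times>\<^sub>F nhds w0) sequentially"
  by (rule filterlim_Pair[OF filterlim_at_right_zero_LIMSEQ[OF assms(1,2)] assms(3)])

lemma at_right_nhds_prod_neq_bot: "at_right (0::real) \<times>\<^sub>F nhds (w::'v::real_normed_vector) \<noteq> bot"
  by (simp add: prod_filter_eq_bot)

lemma LIMSEQ_one_over_Suc: "(\<lambda>n. 1 / real (Suc n)) \<longlonglongrightarrow> 0"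
  using LIMSEQ_Suc[OF lim_1_over_n] by simp

lemma ereal_nonpos_add_eq_zero:
  assumes "(x::ereal) \<le> 0" "y \<le> 0" "x + y = 0"
  shows "x = 0"
  using assms by (cases x; cases y) auto

lemma ereal_add_eq_real_imp_real:
  assumes "(x::ereal) + y = ereal r"
  obtains a b where "x = ereal a" "y = ereal b"
  using assms by (cases x; cases y) auto

lemma ereal_diff_neg_imp_real_bounds:
  assumes "ereal L - A - B < 0" "\<bar>A\<bar> \<noteq> \<infinity> \<or> \<bar>B\<bar> \<noteq> \<infinity>"
  obtains p q where "ereal p < A" "ereal q < B" "L < p + q"
proof (cases A; cases B)
  fix a b assume ab: "A = ereal a" "B = ereal b"
  define e where "e = (a + b - L) / 3"
  have "e > 0" using ab assms(1) by (simp add: e_def)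
  then show thesis using that[of "a - e" "b - e"] ab by (simp add: e_def field_simps)
next
  fix a assume "A = ereal a" "B = \<infinity>"
  then show thesis using that[of "a - 1" "L - a + 2"] by simp
next
  fix b assume "A = \<infinity>" "B = ereal b"
  then show thesis using that[of "L - b + 2" "b - 1"] by simp
qed (use assms in auto)

subsection \<open>Subderivatives along sequences\<close>

lemma semidifferentiable_subderiv:
  assumes "semidifferentiable \<psi> z"
  obtains L where "subderiv \<psi> z w = ereal L"
    "((\<lambda>(t, w'). (\<psi> (z + t *\<^sub>R w') - \<psi> z) / t) \<longlongrightarrow> L) (at_right 0 \<times>\<^sub>F nhds w)"
proof -
  obtain L where L: "((\<lambda>(t, w'). (\<psi> (z + t *\<^sub>R w') - \<psi> z) / t) \<longlongrightarrow> L) (at_right 0 \<times>\<^sub>F nhds w)"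
    using assms unfolding semidifferentiable_def by blast
  then have "((\<lambda>p. ereal ((\<lambda>(t, w'). (\<psi> (z + t *\<^sub>R w') - \<psi> z) / t) p)) \<longlongrightarrow> ereal L)
      (at_right 0 \<times>\<^sub>F nhds w)"
    by (rule tendsto_ereal)
  then have "subderiv \<psi> z w = ereal L"
    unfolding subderiv_def
    by (intro lim_imp_Liminf[OF at_right_nhds_prod_neq_bot]) (simp add: case_prod_beta')
  with L show thesis using that by blast
qed

lemma semidifferentiable_subderiv_LIMSEQ:
  assumes "semidifferentiable \<psi> z" "\<forall>k. t k > 0" "t \<longlonglongrightarrow> 0" "w' \<longlonglongrightarrow> w"
  obtains L where "subderiv \<psi> z w = ereal L"
    "(\<lambda>k. (\<psi> (z + t k *\<^sub>R w' k) - \<psi> z) / t k) \<longlonglongrightarrow> L"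
proof -
  obtain L where L: "subderiv \<psi> z w = ereal L"
    "((\<lambda>(t, w'). (\<psi> (z + t *\<^sub>R w') - \<psi> z) / t) \<longlongrightarrow> L) (at_right 0 \<times>\<^sub>F nhds w)"
    using semidifferentiable_subderiv[OF assms(1)] by blast
  have "(\<lambda>k. (\<psi> (z + t k *\<^sub>R w' k) - \<psi> z) / t k) \<longlonglongrightarrow> L"
    using filterlim_compose[OF L(2) filterlim_Pair_at_right_nhds[OF assms(2-4)]] by simp
  with L(1) show thesis by (rule that)
qed

lemma subderiv_less_imp_eventually:
  assumes "\<forall>k. t k > 0" "t \<longlonglongrightarrow> 0" "w' \<longlonglongrightarrow> w" "c < subderiv \<psi> z w"
  shows "eventually (\<lambda>k. c < ereal ((\<psi> (z + t k *\<^sub>R w' k) - \<psi> z) / t k)) sequentially"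
proof -
  have "eventually (\<lambda>p. c < (\<lambda>(t, w'). ereal ((\<psi> (z + t *\<^sub>R w') - \<psi> z) / t)) p)
      (at_right 0 \<times>\<^sub>F nhds w)"
    using assms(4) le_Liminf_iff unfolding subderiv_def by blast
  from filterlim_iff[THEN iffD1, OF filterlim_Pair_at_right_nhds[OF assms(1-3)], rule_format, OF this]
  show ?thesis by simp
qed

lemma second_subderiv_ind_less_imp_eventually:
  assumes "\<forall>k. t k > 0" "t \<longlonglongrightarrow> 0" "w' \<longlonglongrightarrow> w" "\<forall>k. z + t k *\<^sub>R w' k \<in> S"
    "c < second_subderiv_ind S z \<phi> w"
  shows "eventually (\<lambda>k. c < - 2 * \<phi> (w' k) / ereal (t k)) sequentially"
proof -
  let ?F = "inf (at_right 0 \<times>\<^sub>F nhds w) (principal {(t, w'). z + t *\<^sub>R w' \<in> S})"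
  have "eventually (\<lambda>p. c < (\<lambda>(t, w'). - 2 * \<phi> w' / ereal t) p) ?F"
    using assms(5) le_Liminf_iff unfolding second_subderiv_ind_def by blast
  moreover have "filterlim (\<lambda>k. (t k, w' k)) ?F sequentially"
    using filterlim_Pair_at_right_nhds[OF assms(1-3)] assms(4)
    by (simp add: filterlim_inf filterlim_principal)
  ultimately show ?thesis
    unfolding filterlim_iff by (auto elim!: allE[where x="\<lambda>p. c < (\<lambda>(t, w'). - 2 * \<phi> w' / ereal t) p"])
qed

lemma subderiv_zero_le: "subderiv \<psi> z 0 \<le> 0"
proof (rule ccontr)
  assume "\<not> ?thesis"
  then have "0 < subderiv \<psi> z 0" by simp
  from subderiv_less_imp_eventually[of "\<lambda>k. 1 / real (Suc k)" "\<lambda>k. 0", OF _ LIMSEQ_one_over_Suc _ this]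
  have "eventually (\<lambda>k. (0::ereal) < 0) sequentially" by simp
  then show False by simp
qed

lemma semidifferentiable_subderiv_zero:
  assumes "semidifferentiable \<psi> z"
  shows "subderiv \<psi> z 0 = 0"
proof -
  have pos: "\<forall>k. 1 / real (Suc k) > 0" by simp
  obtain L where L: "subderiv \<psi> z 0 = ereal L"
    "(\<lambda>k. (\<psi> (z + (1 / real (Suc k)) *\<^sub>R 0) - \<psi> z) / (1 / real (Suc k))) \<longlonglongrightarrow> L"
    by (rule semidifferentiable_subderiv_LIMSEQ[OF assms pos LIMSEQ_one_over_Suc tendsto_const])
  from L(2) have "(\<lambda>k. 0) \<longlonglongrightarrow> L" by simp
  then have "L = 0" using LIMSEQ_unique[OF tendsto_const] by blast
  with L(1) show ?thesis by (simp add: zero_ereal_def)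
qed

lemma twice_semidifferentiable_LIMSEQ:
  assumes "twice_semidifferentiable \<psi> z" "\<forall>k. t k > 0" "t \<longlonglongrightarrow> 0" "w' \<longlonglongrightarrow> w"
  obtains L where "(second_quot \<psi> z \<longlongrightarrow> ereal L) (at_right 0 \<times>\<^sub>F nhds w)"
    "(\<lambda>k. second_quot \<psi> z (t k, w' k)) \<longlonglongrightarrow> ereal L"
proof -
  obtain L where L: "(second_quot \<psi> z \<longlongrightarrow> ereal L) (at_right 0 \<times>\<^sub>F nhds w)"
    using assms(1) unfolding twice_semidifferentiable_def by blast
  moreover have "(\<lambda>k. second_quot \<psi> z (t k, w' k)) \<longlonglongrightarrow> ereal L"
    using filterlim_compose[OF L filterlim_Pair_at_right_nhds[OF assms(2-4)]] by simp
  ultimately show thesis by (rule that)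
qed

subsection \<open>Consequences of the separation property\<close>

lemma separation_subderiv_Pair:
  "separation_property f xb yb \<Longrightarrow>
    subderiv (\<lambda>p. f (fst p) (snd p)) (xb, yb) (u, h) = dx_f f xb yb u + dy_f f xb yb h"
  by (simp add: separation_property_def)

lemma separation_dx_f_zero:
  assumes "semidifferentiable (\<lambda>p. f (fst p) (snd p)) (xb, yb)" "separation_property f xb yb"
  shows "dx_f f xb yb 0 = 0"
proof -
  have "dx_f f xb yb 0 + dy_f f xb yb 0 = 0"
    using separation_subderiv_Pair[OF assms(2), of 0 0] semidifferentiable_subderiv_zero[OF assms(1)]
    by (simp add: zero_prod_def)
  then show ?thesis
    using ereal_nonpos_add_eq_zero subderiv_zero_le unfolding dx_f_def dy_f_def by metis
qed

lemma separation_subderiv_vertical: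
  assumes "semidifferentiable (\<lambda>p. f (fst p) (snd p)) (xb, yb)" "separation_property f xb yb"
  shows "subderiv (\<lambda>p. f (fst p) (snd p)) (xb, yb) (0, h) = dy_f f xb yb h"
  using separation_subderiv_Pair[OF assms(2)] separation_dx_f_zero[OF assms] by simp

lemma separation_partials_real:
  assumes "semidifferentiable (\<lambda>p. f (fst p) (snd p)) (xb, yb)" "separation_property f xb yb"
  obtains a b where "dx_f f xb yb u = ereal a" "dy_f f xb yb h = ereal b"
proof -
  obtain D where "subderiv (\<lambda>p. f (fst p) (snd p)) (xb, yb) (u, h) = ereal D"
    using semidifferentiable_subderiv[OF assms(1)] by blast
  then have "dx_f f xb yb u + dy_f f xb yb h = ereal D"
    using separation_subderiv_Pair[OF assms(2)] by simp
  then show thesis using that ereal_add_eq_real_imp_real by metis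
qed

lemma separation_dyy_f_eq_Lim:
  fixes f :: "'a::real_normed_vector \<Rightarrow> 'b::real_normed_vector \<Rightarrow> real"
  assumes "semidifferentiable (\<lambda>p. f (fst p) (snd p)) (xb, yb)" "separation_property f xb yb"
    and "(second_quot (\<lambda>p. f (fst p) (snd p)) (xb, yb) \<longlongrightarrow> L) (at_right 0 \<times>\<^sub>F nhds (0, h))"
  shows "dyy_f f xb yb h = L"
proof -
  let ?\<psi> = "\<lambda>p. f (fst p) (snd p)"
  have restrict: "second_quot (f xb) yb = second_quot ?\<psi> (xb, yb) \<circ> (\<lambda>(t, h'). (t, (0, h')))"
  proof
    fix p :: "real \<times> 'b"
    obtain s h' where p: "p = (s, h')" by (cases p)
    have "subderiv (f xb) yb h' = subderiv ?\<psi> (xb, yb) (0, h')"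
      using separation_subderiv_vertical[OF assms(1,2)] by (simp add: dy_f_def)
    then show "second_quot (f xb) yb p = (second_quot ?\<psi> (xb, yb) \<circ> (\<lambda>(t, h'). (t, (0, h')))) p"
      unfolding p second_quot_def by simp
  qed
  have "filterlim (\<lambda>(t, h'). (t, ((0::'a), h'))) (at_right 0 \<times>\<^sub>F nhds (0, h)) (at_right 0 \<times>\<^sub>F nhds h)"
  proof -
    have "filterlim (\<lambda>p. (fst p, ((0::'a), snd p))) (at_right 0 \<times>\<^sub>F nhds (0, h)) (at_right 0 \<times>\<^sub>F nhds h)"
      by (intro filterlim_Pair filterlim_fst tendsto_Pair tendsto_const filterlim_snd)
    then show ?thesis by (simp add: case_prod_beta')
  qed
  then show ?thesis
    unfolding dyy_f_def second_subderiv_def restrict o_def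
    by (rule lim_imp_Liminf[OF at_right_nhds_prod_neq_bot filterlim_compose[OF assms(3)]])
qed

subsection \<open>First- and second-order consequences of an ascent sequence\<close>

lemma separation_dy_f_zero_of_ascent:
  assumes sd: "semidifferentiable (\<lambda>p. f (fst p) (snd p)) (xb, yb)"
    and sep: "separation_property f xb yb"
    and t: "\<forall>k. t k > 0" "t \<longlonglongrightarrow> 0" and u: "u \<longlonglongrightarrow> 0" and h: "h \<longlonglongrightarrow> h0"
    and ascent: "\<forall>k. f xb yb \<le> f (xb + t k *\<^sub>R u k) (yb + t k *\<^sub>R h k)"
    and descent: "eventually (\<lambda>k. f xb (yb + t k *\<^sub>R h k) \<le> f xb yb) sequentially"
  shows "dy_f f xb yb h0 = 0"
proof -
  obtain L where L: "subderiv (\<lambda>p. f (fst p) (snd p)) (xb, yb) (0, h0) = ereal L"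
    "(\<lambda>k. (f (xb + t k *\<^sub>R u k) (yb + t k *\<^sub>R h k) - f xb yb) / t k) \<longlonglongrightarrow> L"
    using semidifferentiable_subderiv_LIMSEQ[OF sd t tendsto_Pair[OF u h]] by auto
  have "0 \<le> L"
    using L(2) by (rule LIMSEQ_le_const) (use ascent t(1) in \<open>auto intro!: divide_nonneg_pos\<close>)
  moreover have "dy_f f xb yb h0 = ereal L"
    using L(1) separation_subderiv_vertical[OF sd sep] by simp
  moreover have "\<not> 0 < dy_f f xb yb h0"
  proof
    assume "0 < dy_f f xb yb h0"
    then have "eventually (\<lambda>k. 0 < ereal ((f xb (yb + t k *\<^sub>R h k) - f xb yb) / t k)) sequentially"
      using subderiv_less_imp_eventually[OF t h, of 0 "f xb" yb] by (simp add: dy_f_def)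
    with descent have "eventually (\<lambda>k. False) sequentially"
    proof eventually_elim
      case (elim k)
      then show False using t(1)[rule_format, of k] by (simp add: zero_less_divide_iff)
    qed
    then show False by simp
  qed
  ultimately show ?thesis by (simp add: zero_ereal_def)
qed

text \<open>By the separation property the second-order quotient along the sequence equals
  \<open>2 (f(x\<^sub>k,y\<^sub>k) - f(xb,yb)) / t\<^sub>k\<^sup>2 - 2 d\<^sub>xf(xb,yb)(u\<^sub>k) / t\<^sub>k - 2 d\<^sub>yf(xb,yb)(h\<^sub>k) / t\<^sub>k\<close>;
  the first term is nonnegative and the last two are the quotients in the second
  subderivatives of the indicators of \<open>X\<close> and \<open>Y\<close>.\<close>

lemma separation_second_order_ascent:
  fixes f :: "'a::real_normed_vector \<Rightarrow> 'b::real_normed_vector \<Rightarrow> real"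
  assumes ts: "twice_semidifferentiable (\<lambda>p. f (fst p) (snd p)) (xb, yb)"
    and sep: "separation_property f xb yb"
    and t: "\<forall>k. t k > 0" "t \<longlonglongrightarrow> 0" and u: "u \<longlonglongrightarrow> 0" and h: "h \<longlonglongrightarrow> h0"
    and inX: "\<forall>k. xb + t k *\<^sub>R u k \<in> X" and inY: "\<forall>k. yb + t k *\<^sub>R h k \<in> Y"
    and ascent: "\<forall>k. f xb yb \<le> f (xb + t k *\<^sub>R u k) (yb + t k *\<^sub>R h k)"
    and p: "ereal p < second_subderiv_ind X xb (dx_f f xb yb) 0"
    and q: "ereal q < second_subderiv_ind Y yb (dy_f f xb yb) h0"
  shows "ereal (p + q) \<le> dyy_f f xb yb h0"
proof -
  let ?\<psi> = "\<lambda>p. f (fst p) (snd p)"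
  have sd: "semidifferentiable ?\<psi> (xb, yb)"
    using ts unfolding twice_semidifferentiable_def by blast
  obtain L where L: "(second_quot ?\<psi> (xb, yb) \<longlongrightarrow> ereal L) (at_right 0 \<times>\<^sub>F nhds (0, h0))"
    "(\<lambda>k. second_quot ?\<psi> (xb, yb) (t k, (u k, h k))) \<longlonglongrightarrow> ereal L"
    using twice_semidifferentiable_LIMSEQ[OF ts t tendsto_Pair[OF u h]] by blast
  have "eventually (\<lambda>k. ereal (p + q) \<le> second_quot ?\<psi> (xb, yb) (t k, (u k, h k))) sequentially"
    using second_subderiv_ind_less_imp_eventually[OF t u inX p]
      second_subderiv_ind_less_imp_eventually[OF t h inY q]
  proof eventually_elim
    case (elim k)
    obtain a b where ab: "dx_f f xb yb (u k) = ereal a" "dy_f f xb yb (h k) = ereal b"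
      using separation_partials_real[OF sd sep] by metis
    have tk: "t k > 0" using t(1) by simp
    define \<Delta> where "\<Delta> = f (xb + t k *\<^sub>R u k) (yb + t k *\<^sub>R h k) - f xb yb"
    have "p < -2 * a / t k" "q < -2 * b / t k"
      using elim ab tk by simp_all
    moreover have "0 \<le> 2 * \<Delta> / (t k)\<^sup>2"
      using ascent by (simp add: \<Delta>_def)
    moreover have "second_quot ?\<psi> (xb, yb) (t k, (u k, h k))
        = ereal (2 * \<Delta> / (t k)\<^sup>2 + (-2 * a / t k + -2 * b / t k))"
      using separation_subderiv_Pair[OF sep] ab tk
      by (simp add: second_quot_def \<Delta>_def field_simps power2_eq_square)
    ultimately show ?case by simp
  qed
  then have "ereal (p + q) \<le> ereal L"
    by (rule tendsto_lowerbound[OF L(2) _ trivial_limit_sequentially])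
  then show ?thesis
    using separation_dyy_f_eq_Lim[OF sd sep L(1)] by simp
qed

lemma second_order_condition_excludes_ascent:
  fixes f :: "'a::real_normed_vector \<Rightarrow> 'b::real_normed_vector \<Rightarrow> real"
  assumes ts: "twice_semidifferentiable (\<lambda>p. f (fst p) (snd p)) (xb, yb)"
    and sep: "separation_property f xb yb"
    and second_order: "\<forall>h \<in> tangent_cone Y yb - {0}. dy_f f xb yb h = 0 \<longrightarrow>
           (\<bar>second_subderiv_ind X xb (dx_f f xb yb) 0\<bar> \<noteq> \<infinity> \<or>
            \<bar>second_subderiv_ind Y yb (dy_f f xb yb) h\<bar> \<noteq> \<infinity>) \<and>
           dyy_f f xb yb h - second_subderiv_ind X xb (dx_f f xb yb) 0
             - second_subderiv_ind Y yb (dy_f f xb yb) h < 0"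
    and t: "\<forall>k. t k > 0" "t \<longlonglongrightarrow> 0" and u: "u \<longlonglongrightarrow> 0" and h: "h \<longlonglongrightarrow> h0" "h0 \<noteq> 0"
    and inX: "\<forall>k. xb + t k *\<^sub>R u k \<in> X" and inY: "\<forall>k. yb + t k *\<^sub>R h k \<in> Y"
    and ascent: "\<forall>k. f xb yb \<le> f (xb + t k *\<^sub>R u k) (yb + t k *\<^sub>R h k)"
    and descent: "eventually (\<lambda>k. f xb (yb + t k *\<^sub>R h k) \<le> f xb yb) sequentially"
  shows False
proof -
  have sd: "semidifferentiable (\<lambda>p. f (fst p) (snd p)) (xb, yb)"
    using ts unfolding twice_semidifferentiable_def by blast
  have "h0 \<in> tangent_cone Y yb - {0}"
    using t h inY unfolding tangent_cone_def by blast
  moreover have "dy_f f xb yb h0 = 0"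
    using separation_dy_f_zero_of_ascent[OF sd sep t u h(1) ascent descent] .
  moreover obtain L where "dyy_f f xb yb h0 = ereal L"
    using ts separation_dyy_f_eq_Lim[OF sd sep] unfolding twice_semidifferentiable_def by metis
  ultimately obtain p q where
    "ereal p < second_subderiv_ind X xb (dx_f f xb yb) 0"
    "ereal q < second_subderiv_ind Y yb (dy_f f xb yb) h0" "ereal (p + q) > dyy_f f xb yb h0"
    using second_order ereal_diff_neg_imp_real_bounds by (metis less_ereal.simps(1))
  then show False
    using separation_second_order_ascent[OF ts sep t u h(1) inX inY ascent] by (simp add: not_le[symmetric])
qed

subsection \<open>Calmness of the radius\<close>

lemma Sup_image_attained:
  fixes f :: "'a \<Rightarrow> 'b::metric_space \<Rightarrow> real"
  assumes "\<forall>x\<in>X. \<forall>y0\<in>Y. \<forall>\<epsilon>\<ge>0. \<exists>y\<in>Y \<inter> cball y0 \<epsilon>. \<forall>y'\<in>Y \<inter> cball y0 \<epsilon>. f x y' \<le> f x y"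
    and "x \<in> X" "y0 \<in> Y" "0 \<le> \<epsilon>"
  obtains y where "y \<in> Y \<inter> cball y0 \<epsilon>" "\<forall>y'\<in>Y \<inter> cball y0 \<epsilon>. f x y' \<le> f x y"
    "Sup (f x ` (Y \<inter> cball y0 \<epsilon>)) = f x y"
proof -
  obtain y where y: "y \<in> Y \<inter> cball y0 \<epsilon>" "\<forall>y'\<in>Y \<inter> cball y0 \<epsilon>. f x y' \<le> f x y"
    using assms by blast
  moreover have "Sup (f x ` (Y \<inter> cball y0 \<epsilon>)) = f x y"
    by (rule cSup_eq_maximum) (use y in auto)
  ultimately show thesis by (rule that)
qed

lemma escaping_maximizer:
  fixes f :: "'a \<Rightarrow> 'b::metric_space \<Rightarrow> real"
  assumes standing: "\<forall>x\<in>X. \<forall>y0\<in>Y. \<forall>\<epsilon>\<ge>0. \<exists>y\<in>Y \<inter> cball y0 \<epsilon>. \<forall>y'\<in>Y \<inter> cball y0 \<epsilon>. f x y' \<le> f x y"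
    and "x \<in> X" "yb \<in> Y" "0 \<le> \<rho>" "0 \<le> r"
    and reach: "f xb yb \<le> Sup (f x ` (Y \<inter> cball yb \<rho>))"
    and miss: "Sup (f x ` (Y \<inter> cball yb r)) < f xb yb"
  obtains y where "y \<in> Y \<inter> cball yb \<rho>" "f xb yb \<le> f x y" "r < dist yb y"
proof -
  obtain y where y: "y \<in> Y \<inter> cball yb \<rho>" "\<forall>y'\<in>Y \<inter> cball yb \<rho>. f x y' \<le> f x y"
      "Sup (f x ` (Y \<inter> cball yb \<rho>)) = f x y"
    by (rule Sup_image_attained[OF standing assms(2-4)])
  obtain y' where y': "y' \<in> Y \<inter> cball yb r" "\<forall>y''\<in>Y \<inter> cball yb r. f x y'' \<le> f x y'"
      "Sup (f x ` (Y \<inter> cball yb r)) = f x y'"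
    by (rule Sup_image_attained[OF standing assms(2,3,5)])
  have "f xb yb \<le> f x y" using reach y(3) by simp
  moreover have "y \<notin> cball yb r"
  proof
    assume "y \<in> cball yb r"
    then have "f x y \<le> Sup (f x ` (Y \<inter> cball yb r))" using y(1) y' by simp
    with miss \<open>f xb yb \<le> f x y\<close> show False by simp
  qed
  ultimately show thesis using that y(1) by simp
qed

lemma escaping_sequence_LIMSEQ:
  fixes x :: "nat \<Rightarrow> 'a::real_normed_vector" and y :: "nat \<Rightarrow> 'b::real_normed_vector"
  assumes \<delta>: "\<forall>n. 0 < \<delta> n \<and> \<delta> n \<le> 1 / real (Suc n)" and \<tau>: "(\<tau> \<longlongrightarrow> 0) (at_right 0)"
    and x: "\<forall>n. dist xb (x n) \<le> \<delta> n"
    and y: "\<forall>n. dist yb (y n) \<le> \<tau> (\<delta> n)" "\<forall>n. real (Suc n) * \<delta> n < dist yb (y n)"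
  shows "y \<longlonglongrightarrow> yb" "(\<lambda>n. norm (x n - xb) / norm (y n - yb)) \<longlonglongrightarrow> 0"
proof -
  have "\<delta> \<longlonglongrightarrow> 0"
  proof (rule tendsto_sandwich[OF _ _ tendsto_const LIMSEQ_one_over_Suc])
    show "\<forall>\<^sub>F n in sequentially. 0 \<le> \<delta> n" "\<forall>\<^sub>F n in sequentially. \<delta> n \<le> 1 / real (Suc n)"
      using \<delta> by (simp_all add: less_imp_le)
  qed
  with \<delta> have "filterlim \<delta> (at_right 0) sequentially"
    by (intro filterlim_at_right_zero_LIMSEQ) auto
  then have \<tau>\<delta>: "(\<lambda>n. \<tau> (\<delta> n)) \<longlonglongrightarrow> 0"
    by (rule filterlim_compose[OF \<tau>])
  have "(\<lambda>n. dist (y n) yb) \<longlonglongrightarrow> 0"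
  proof (rule tendsto_sandwich[OF _ _ tendsto_const \<tau>\<delta>])
    show "\<forall>\<^sub>F n in sequentially. 0 \<le> dist (y n) yb" by simp
    show "\<forall>\<^sub>F n in sequentially. dist (y n) yb \<le> \<tau> (\<delta> n)"
      using y(1) by (intro always_eventually) (metis dist_commute)
  qed
  then show "y \<longlonglongrightarrow> yb"
    by (rule tendsto_dist_iff[THEN iffD2])
  have "norm (x n - xb) / norm (y n - yb) \<le> 1 / real (Suc n)" for n
  proof -
    have "norm (x n - xb) \<le> \<delta> n"
      using x by (metis dist_commute dist_norm)
    then have "real (Suc n) * norm (x n - xb) \<le> real (Suc n) * \<delta> n"
      by (rule mult_left_mono) simp
    also have "\<dots> < norm (y n - yb)"
      using y(2) by (metis dist_commute dist_norm)
    finally have "real (Suc n) * norm (x n - xb) < norm (y n - yb)" .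
    then show ?thesis
      by (simp add: field_simps divide_le_eq_1)
  qed
  then show "(\<lambda>n. norm (x n - xb) / norm (y n - yb)) \<longlonglongrightarrow> 0"
    by (intro tendsto_sandwich[OF _ _ tendsto_const LIMSEQ_one_over_Suc] always_eventually allI) simp_all
qed

lemma rescaled_subsequence:
  fixes x :: "nat \<Rightarrow> 'a::real_normed_vector" and y :: "nat \<Rightarrow> 'b::euclidean_space"
  assumes "\<forall>n. y n \<noteq> yb" "y \<longlonglongrightarrow> yb" "(\<lambda>n. norm (x n - xb) / norm (y n - yb)) \<longlonglongrightarrow> 0"
  obtains r t u h l where "strict_mono r" "\<forall>k. t k > 0" "t \<longlonglongrightarrow> 0" "u \<longlonglongrightarrow> 0" "h \<longlonglongrightarrow> l" "l \<noteq> 0"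
    "\<forall>k. xb + t k *\<^sub>R u k = x (r k)" "\<forall>k. yb + t k *\<^sub>R h k = y (r k)"
proof -
  define s where "s n = norm (y n - yb)" for n
  define v where "v n = (1 / s n) *\<^sub>R (x n - xb)" for n
  define w where "w n = (1 / s n) *\<^sub>R (y n - yb)" for n
  have s: "\<forall>n. s n > 0"
    using assms(1) by (simp add: s_def)
  have "s \<longlonglongrightarrow> 0"
    unfolding s_def using tendsto_norm_zero[OF LIM_zero[OF assms(2)]] .
  have "(\<lambda>n. norm (v n)) \<longlonglongrightarrow> 0"
    using assms(3) s by (simp add: v_def s_def)
  then have "v \<longlonglongrightarrow> 0"
    by (rule tendsto_norm_zero_cancel)
  have "\<forall>n. w n \<in> sphere 0 1"
    using s by (simp add: w_def s_def)
  then obtain l r where l: "l \<in> sphere 0 1" and r: "strict_mono r" and "(w \<circ> r) \<longlonglongrightarrow> l"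
    using compact_imp_seq_compact[OF compact_sphere] unfolding seq_compact_def by metis
  moreover have "\<forall>k. xb + (s \<circ> r) k *\<^sub>R (v \<circ> r) k = x (r k)" "\<forall>k. yb + (s \<circ> r) k *\<^sub>R (w \<circ> r) k = y (r k)"
    using s by (simp_all add: v_def w_def less_imp_neq[symmetric])
  moreover have "l \<noteq> 0"
    using l by auto
  ultimately show thesis
    using that[of r "s \<circ> r" "v \<circ> r" "w \<circ> r" l] s LIMSEQ_subseq_LIMSEQ[OF \<open>s \<longlonglongrightarrow> 0\<close> r]
      LIMSEQ_subseq_LIMSEQ[OF \<open>v \<longlonglongrightarrow> 0\<close> r] by simp
qed

lemma escaping_sequence_of_no_linear_radius:
  fixes f :: "'a::real_normed_vector \<Rightarrow> 'b::real_normed_vector \<Rightarrow> real"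
  assumes standing: "\<forall>x\<in>X. \<forall>y0\<in>Y. \<forall>\<epsilon>\<ge>0. \<exists>y\<in>Y \<inter> cball y0 \<epsilon>. \<forall>y'\<in>Y \<inter> cball y0 \<epsilon>. f x y' \<le> f x y"
    and minimax: "minimax_with X Y f xb yb \<tau>" and "yb \<in> Y"
    and no_linear: "\<forall>\<kappa>>0. \<forall>\<delta>1>0. \<exists>\<delta> x. 0 < \<delta> \<and> \<delta> \<le> \<delta>1 \<and> x \<in> X \<inter> cball xb \<delta> \<and>
                      Sup (f x ` (Y \<inter> cball yb (\<kappa> * \<delta>))) < f xb yb"
  obtains x y where "\<forall>n. x n \<in> X" "\<forall>n. y n \<in> Y" "\<forall>n. y n \<noteq> yb" "\<forall>n. f xb yb \<le> f (x n) (y n)"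
    "y \<longlonglongrightarrow> yb" "(\<lambda>n. norm (x n - xb) / norm (y n - yb)) \<longlonglongrightarrow> 0"
proof -
  obtain \<delta>0 where "\<delta>0 > 0" and reach: "\<And>\<delta> x. 0 < \<delta> \<Longrightarrow> \<delta> \<le> \<delta>0 \<Longrightarrow> x \<in> X \<inter> cball xb \<delta> \<Longrightarrow>
      f xb yb \<le> Sup (f x ` (Y \<inter> cball yb (\<tau> \<delta>)))"
    using minimax \<open>yb \<in> Y\<close> unfolding minimax_with_def by (meson IntI centre_in_cball less_imp_le)
  have \<tau>: "\<forall>\<delta>\<ge>0. 0 \<le> \<tau> \<delta>" "(\<tau> \<longlongrightarrow> 0) (at_right 0)"
    using minimax unfolding minimax_with_def radius_function_def by auto
  have "\<exists>\<delta> x. 0 < \<delta> \<and> \<delta> \<le> min \<delta>0 (1 / real (Suc n)) \<and> x \<in> X \<inter> cball xb \<delta> \<and>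
      Sup (f x ` (Y \<inter> cball yb (real (Suc n) * \<delta>))) < f xb yb" for n
    using no_linear[rule_format, of "real (Suc n)" "min \<delta>0 (1 / real (Suc n))"] \<open>\<delta>0 > 0\<close> by simp
  then obtain \<delta> x where \<delta>x: "\<And>n. 0 < \<delta> n \<and> \<delta> n \<le> min \<delta>0 (1 / real (Suc n)) \<and> x n \<in> X \<inter> cball xb (\<delta> n) \<and>
      Sup (f (x n) ` (Y \<inter> cball yb (real (Suc n) * \<delta> n))) < f xb yb"
    by metis
  have "\<exists>y. y \<in> Y \<inter> cball yb (\<tau> (\<delta> n)) \<and> f xb yb \<le> f (x n) y \<and> real (Suc n) * \<delta> n < dist yb y" for n
  proof -
    have "x n \<in> X" "0 \<le> \<tau> (\<delta> n)" "0 \<le> real (Suc n) * \<delta> n"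
      "f xb yb \<le> Sup (f (x n) ` (Y \<inter> cball yb (\<tau> (\<delta> n))))"
      using \<delta>x[of n] \<tau>(1) reach[of "\<delta> n" "x n"] by auto
    from escaping_maximizer[OF standing this(1) \<open>yb \<in> Y\<close> this(2,3,4)] \<delta>x[of n]
    show ?thesis by blast
  qed
  then obtain y where y: "\<And>n. y n \<in> Y \<inter> cball yb (\<tau> (\<delta> n)) \<and> f xb yb \<le> f (x n) (y n) \<and>
      real (Suc n) * \<delta> n < dist yb (y n)"
    by metis
  have "\<forall>n. y n \<noteq> yb"
    using y \<delta>x by (metis dist_self mult_pos_pos not_less_iff_gr_or_eq of_nat_0_less_iff zero_less_Suc)
  moreover have "y \<longlonglongrightarrow> yb" "(\<lambda>n. norm (x n - xb) / norm (y n - yb)) \<longlonglongrightarrow> 0"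
    using escaping_sequence_LIMSEQ[of \<delta> \<tau> xb x yb y] \<delta>x y \<tau>(2) by auto
  moreover have "\<forall>n. x n \<in> X" "\<forall>n. y n \<in> Y" "\<forall>n. f xb yb \<le> f (x n) (y n)"
    using \<delta>x y by auto
  ultimately show thesis
    using that by blast
qed

lemma minimax_with_local_max:
  assumes "minimax_with X Y f xb yb \<tau>" "xb \<in> X"
  obtains \<delta>0 where "\<delta>0 > 0" "\<forall>y\<in>Y \<inter> cball yb \<delta>0. f xb y \<le> f xb yb"
proof -
  obtain \<delta>0 where "\<delta>0 > 0" and minimax: "\<forall>\<delta>. 0 < \<delta> \<and> \<delta> \<le> \<delta>0 \<longrightarrow> (\<forall>x\<in>X \<inter> cball xb \<delta>. \<forall>y\<in>Y \<inter> cball yb \<delta>.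
      f xb y \<le> f xb yb \<and> f xb yb \<le> Sup (f x ` (Y \<inter> cball yb (\<tau> \<delta>))))"
    using assms(1) unfolding minimax_with_def by blast
  moreover have "\<forall>y\<in>Y \<inter> cball yb \<delta>0. f xb y \<le> f xb yb"
    using minimax[rule_format, of \<delta>0 xb] \<open>\<delta>0 > 0\<close> assms(2) by simp
  with \<open>\<delta>0 > 0\<close> show thesis by (rule that)
qed

lemma second_order_condition_excludes_escaping_sequence:
  fixes f :: "'a::real_normed_vector \<Rightarrow> 'b::euclidean_space \<Rightarrow> real"
  assumes ts: "twice_semidifferentiable (\<lambda>p. f (fst p) (snd p)) (xb, yb)"
    and sep: "separation_property f xb yb"
    and second_order: "\<forall>h \<in> tangent_cone Y yb - {0}. dy_f f xb yb h = 0 \<longrightarrow>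
           (\<bar>second_subderiv_ind X xb (dx_f f xb yb) 0\<bar> \<noteq> \<infinity> \<or>
            \<bar>second_subderiv_ind Y yb (dy_f f xb yb) h\<bar> \<noteq> \<infinity>) \<and>
           dyy_f f xb yb h - second_subderiv_ind X xb (dx_f f xb yb) 0
             - second_subderiv_ind Y yb (dy_f f xb yb) h < 0"
    and local_max: "\<delta>0 > 0" "\<forall>y\<in>Y \<inter> cball yb \<delta>0. f xb y \<le> f xb yb"
    and x: "\<forall>n. x n \<in> X" and y: "\<forall>n. y n \<in> Y" "\<forall>n. y n \<noteq> yb"
    and ascent: "\<forall>n. f xb yb \<le> f (x n) (y n)"
    and y_lim: "y \<longlonglongrightarrow> yb" and ratio: "(\<lambda>n. norm (x n - xb) / norm (y n - yb)) \<longlonglongrightarrow> 0"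
  shows False
proof -
  obtain r t u h l where r: "strict_mono r" and tuh: "\<forall>k. t k > 0" "t \<longlonglongrightarrow> 0" "u \<longlonglongrightarrow> 0" "h \<longlonglongrightarrow> l" "l \<noteq> 0"
    and xr: "\<forall>k. xb + t k *\<^sub>R u k = x (r k)" and yr: "\<forall>k. yb + t k *\<^sub>R h k = y (r k)"
    using rescaled_subsequence[OF y(2) y_lim ratio] by blast
  have "eventually (\<lambda>k. dist (y (r k)) yb < \<delta>0) sequentially"
    using LIMSEQ_subseq_LIMSEQ[OF y_lim r] local_max(1) unfolding tendsto_iff o_def by blast
  then have "eventually (\<lambda>k. f xb (yb + t k *\<^sub>R h k) \<le> f xb yb) sequentially"
    by eventually_elim (use y(1) yr local_max(2) in \<open>auto simp: dist_commute\<close>)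
  then show False
    using second_order_condition_excludes_ascent[OF ts sep second_order tuh] xr yr x y(1) ascent
    by auto
qed

lemma local_minimax_linear_radius:
  fixes f :: "'a::real_normed_vector \<Rightarrow> 'b::euclidean_space \<Rightarrow> real"
  assumes standing: "\<forall>x\<in>X. \<forall>y0\<in>Y. \<forall>\<epsilon>\<ge>0. \<exists>y\<in>Y \<inter> cball y0 \<epsilon>. \<forall>y'\<in>Y \<inter> cball y0 \<epsilon>. f x y' \<le> f x y"
    and lm: "local_minimax X Y f xb yb"
    and ts: "twice_semidifferentiable (\<lambda>p. f (fst p) (snd p)) (xb, yb)"
    and sep: "separation_property f xb yb"
    and second_order: "\<forall>h \<in> tangent_cone Y yb - {0}. dy_f f xb yb h = 0 \<longrightarrow>
           (\<bar>second_subderiv_ind X xb (dx_f f xb yb) 0\<bar> \<noteq> \<infinity> \<or>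
            \<bar>second_subderiv_ind Y yb (dy_f f xb yb) h\<bar> \<noteq> \<infinity>) \<and>
           dyy_f f xb yb h - second_subderiv_ind X xb (dx_f f xb yb) 0
             - second_subderiv_ind Y yb (dy_f f xb yb) h < 0"
  shows "\<exists>\<kappa>>0. \<exists>\<delta>1>0. \<forall>\<delta> x. 0 < \<delta> \<and> \<delta> \<le> \<delta>1 \<and> x \<in> X \<inter> cball xb \<delta> \<longrightarrow>
           f xb yb \<le> Sup (f x ` (Y \<inter> cball yb (\<kappa> * \<delta>)))"
proof (rule ccontr)
  assume "\<not> ?thesis"
  then have no_linear: "\<forall>\<kappa>>0. \<forall>\<delta>1>0. \<exists>\<delta> x. 0 < \<delta> \<and> \<delta> \<le> \<delta>1 \<and> x \<in> X \<inter> cball xb \<delta> \<and>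
      Sup (f x ` (Y \<inter> cball yb (\<kappa> * \<delta>))) < f xb yb"
    by (auto simp: not_le)
  obtain \<tau> where xb: "xb \<in> X" and yb: "yb \<in> Y" and minimax: "minimax_with X Y f xb yb \<tau>"
    using lm unfolding local_minimax_def by blast
  obtain \<delta>0 where "\<delta>0 > 0" "\<forall>y\<in>Y \<inter> cball yb \<delta>0. f xb y \<le> f xb yb"
    using minimax_with_local_max[OF minimax xb] by blast
  moreover obtain x y where "\<forall>n. x n \<in> X" "\<forall>n. y n \<in> Y" "\<forall>n. y n \<noteq> yb"
    "\<forall>n. f xb yb \<le> f (x n) (y n)" "y \<longlonglongrightarrow> yb" "(\<lambda>n. norm (x n - xb) / norm (y n - yb)) \<longlonglongrightarrow> 0"
    by (rule escaping_sequence_of_no_linear_radius[OF standing minimax yb no_linear])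
  ultimately show False
    by (rule second_order_condition_excludes_escaping_sequence[OF ts sep second_order])
qed

lemma calm_local_minimax_of_linear_radius:
  assumes lm: "local_minimax X Y f xb yb" and "\<kappa> > 0" "\<delta>1 > 0"
    and linear: "\<forall>\<delta> x. 0 < \<delta> \<and> \<delta> \<le> \<delta>1 \<and> x \<in> X \<inter> cball xb \<delta> \<longrightarrow>
           f xb yb \<le> Sup (f x ` (Y \<inter> cball yb (\<kappa> * \<delta>)))"
  shows "calm_local_minimax X Y f xb yb"
proof -
  obtain \<tau> where xb: "xb \<in> X" and yb: "yb \<in> Y" and minimax: "minimax_with X Y f xb yb \<tau>"
    using lm unfolding local_minimax_def by blast
  obtain \<delta>0 where "\<delta>0 > 0" and local_max: "\<forall>y\<in>Y \<inter> cball yb \<delta>0. f xb y \<le> f xb yb"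
    by (rule minimax_with_local_max[OF minimax xb])
  have "((\<lambda>\<delta>. \<kappa> * \<delta>) \<longlongrightarrow> \<kappa> * 0) (at_right 0)"
    by (intro tendsto_intros)
  then have "radius_function (\<lambda>\<delta>. \<kappa> * \<delta>)"
    using \<open>\<kappa> > 0\<close> by (simp add: radius_function_def)
  moreover have "\<exists>\<delta>0>0. \<forall>\<delta>. 0 < \<delta> \<and> \<delta> \<le> \<delta>0 \<longrightarrow> (\<forall>x\<in>X \<inter> cball xb \<delta>. \<forall>y\<in>Y \<inter> cball yb \<delta>.
      f xb y \<le> f xb yb \<and> f xb yb \<le> Sup (f x ` (Y \<inter> cball yb (\<kappa> * \<delta>))))"
  proof (intro exI[of _ "min \<delta>0 \<delta>1"] conjI allI impI ballI)
    fix \<delta> x y assume "0 < \<delta> \<and> \<delta> \<le> min \<delta>0 \<delta>1" "x \<in> X \<inter> cball xb \<delta>" "y \<in> Y \<inter> cball yb \<delta>"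
    then show "f xb y \<le> f xb yb" "f xb yb \<le> Sup (f x ` (Y \<inter> cball yb (\<kappa> * \<delta>)))"
      using local_max linear by auto
  qed (use \<open>\<delta>0 > 0\<close> \<open>\<delta>1 > 0\<close> in simp)
  moreover have "calm_at_0 (\<lambda>\<delta>. \<kappa> * \<delta>)"
    using \<open>\<kappa> > 0\<close> unfolding calm_at_0_def by (auto intro: exI[of _ 1])
  ultimately show ?thesis
    unfolding calm_local_minimax_def minimax_with_def using xb yb by blast
qed

theorem mainTheorem8:
  fixes X :: "'a::euclidean_space set" and Y :: "'b::euclidean_space set"
    and f :: "'a \<Rightarrow> 'b \<Rightarrow> real" and xb :: 'a and yb :: 'b
  assumes "closed X" "X \<noteq> {}" "closed Y" "Y \<noteq> {}"
    and standing: "\<forall>x\<in>X. \<forall>y0\<in>Y. \<forall>\<epsilon>\<ge>0. \<exists>y\<in>Y \<inter> cball y0 \<epsilon>.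
                      \<forall>y'\<in>Y \<inter> cball y0 \<epsilon>. f x y' \<le> f x y"
    and "local_minimax X Y f xb yb"
    and "twice_semidifferentiable (\<lambda>p. f (fst p) (snd p)) (xb, yb)"
    and "separation_property f xb yb"
    and "\<forall>h \<in> tangent_cone Y yb - {0}. dy_f f xb yb h = 0 \<longrightarrow>
           (\<bar>second_subderiv_ind X xb (dx_f f xb yb) 0\<bar> \<noteq> \<infinity> \<or>
            \<bar>second_subderiv_ind Y yb (dy_f f xb yb) h\<bar> \<noteq> \<infinity>) \<and>
           dyy_f f xb yb h - second_subderiv_ind X xb (dx_f f xb yb) 0
             - second_subderiv_ind Y yb (dy_f f xb yb) h < 0"
  shows "calm_local_minimax X Y f xb yb"
proof -
  obtain \<kappa> \<delta>1 where "\<kappa> > 0" "\<delta>1 > 0" "\<forall>\<delta> x. 0 < \<delta> \<and> \<delta> \<le> \<delta>1 \<and> x \<in> X \<inter> cball xb \<delta> \<longrightarrow>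
      f xb yb \<le> Sup (f x ` (Y \<inter> cball yb (\<kappa> * \<delta>)))"
    using local_minimax_linear_radius[OF standing assms(6-9)] by blast
  then show ?thesis
    using calm_local_minimax_of_linear_radius[OF assms(6)] by blast
qed

end
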